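(* Under the setting below, assume moreover that $f_\Theta^\star$ is strictly decreasing and continuous from $[0,\infty)$ onto $(0,1]$, with inverse $f_\Theta^{\star-1}$. Then each marginal satisfies $\Pr(X_i> x)=f_\Theta^\star(x)$ for $x\ge0$, and the survival copula $C$ of $(X_1,\dots,X_n)$, i.e. the function with $\Pr(X_1> x_1,\dots,X_n> x_n)=C\big(f_\Theta^\star(x_1),\dots,f_\Theta^\star(x_n)\big)$, is given for $u_i\in(0,1]$ by $$C(u_1,\dots,u_n)=\sum_{\ell_1=0}^{m_1}\cdots\sum_{\ell_n=0}^{m_n}\beta_{\ell_1,\dots,\ell_n}\,f_\Theta^\star\Big(\sum_{i=1}^n \ell_i\, f_\Theta^{\star-1}(u_i)\Big),$$ with $$\beta_{\ell_1,\dots,\ell_n}=\sum_{\nu_1=0}^{\ell_1}\cdots\sum_{\nu_n=0}^{\ell_n}(-1)^{\sum_{i=1}^n(\ell_i-\nu_i)}\Big[\prod_{i=1}^n\binom{m_i-\nu_i}{m_i-\ell_i}\Big]\Big[\prod_{i=1}^n\binom{m_i}{\nu_i}\Big]\alpha\Big(\tfrac{\nu_1}{m_1},\dots,\tfrac{\nu_n}{m_n}\Big).$$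
   Context: Setting: $n\ge2$, $m_1,\dots,m_n\ge1$ integers; $\alpha$ is a real function on the grid $\prod_i\{0,\tfrac1{m_i},\dots,1\}$ such that $C_B(u_1,\dots,u_n)=\sum_{\nu_1=0}^{m_1}\cdots\sum_{\nu_n=0}^{m_n}\alpha(\tfrac{\nu_1}{m_1},\dots,\tfrac{\nu_n}{m_n})\prod_{i=1}^n\binom{m_i}{\nu_i}u_i^{\nu_i}(1-u_i)^{m_i-\nu_i}$ is a copula on $[0,1]^n$. $(Z_1,\dots,Z_n)$ has standard exponential marginals and joint survival function $\Pr(Z_1>z_1,\dots,Z_n>z_n)=C_B(e^{-z_1},\dots,e^{-z_n})$. $\Theta$ is a positive random variable independent of $(Z_1,\dots,Z_n)$ with density $f_\Theta$ and Laplace transform $f_\Theta^\star(s)=E[e^{-s\Theta}]$, and $X_i=Z_i/\Theta$. *)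

theory Defs
  imports "HOL-Probability.Probability"
begin

text \<open>Points of [0,1]^n are functions nat => real; only indices i < n matter.
  Multi-indices (nu_1,...,nu_n) are elements of PiE {..<n} (...).\<close>

definition bernstein_copula :: "nat \<Rightarrow> (nat \<Rightarrow> nat) \<Rightarrow> ((nat \<Rightarrow> real) \<Rightarrow> real) \<Rightarrow> (nat \<Rightarrow> real) \<Rightarrow> real" where
  "bernstein_copula n m alpha u =
     (\<Sum>\<nu>\<in>PiE {..<n} (\<lambda>i. {0..m i}).
        alpha (\<lambda>i. real (\<nu> i) / real (m i)) *
        (\<Prod>i<n. real (m i choose \<nu> i) * u i ^ \<nu> i * (1 - u i) ^ (m i - \<nu> i)))"

definition is_copula :: "nat \<Rightarrow> ((nat \<Rightarrow> real) \<Rightarrow> real) \<Rightarrow> bool" where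
  "is_copula n C \<longleftrightarrow>
     (\<forall>u. (\<forall>i<n. u i \<in> {0..1}) \<longrightarrow> (\<exists>i<n. u i = 0) \<longrightarrow> C u = 0) \<and>
     (\<forall>u k. k < n \<longrightarrow> u k \<in> {0..1} \<longrightarrow> (\<forall>i<n. i \<noteq> k \<longrightarrow> u i = 1) \<longrightarrow> C u = u k) \<and>
     (\<forall>a b. (\<forall>i<n. 0 \<le> a i \<and> a i \<le> b i \<and> b i \<le> 1) \<longrightarrow>
        0 \<le> (\<Sum>S\<in>Pow {..<n}. (-1) ^ (n - card S) * C (\<lambda>i. if i \<in> S then b i else a i)))"

definition beta_coeff :: "nat \<Rightarrow> (nat \<Rightarrow> nat) \<Rightarrow> ((nat \<Rightarrow> real) \<Rightarrow> real) \<Rightarrow> (nat \<Rightarrow> nat) \<Rightarrow> real" where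
  "beta_coeff n m alpha l =
     (\<Sum>\<nu>\<in>PiE {..<n} (\<lambda>i. {0..l i}).
        (-1) ^ (\<Sum>i<n. l i - \<nu> i) *
        (\<Prod>i<n. real ((m i - \<nu> i) choose (m i - l i))) *
        (\<Prod>i<n. real (m i choose \<nu> i)) *
        alpha (\<lambda>i. real (\<nu> i) / real (m i)))"

end

theory Submission
  imports Defs
begin

(* Conditionally on \<Theta> = t, the event {Z_i / \<Theta> > y_i for all i} is {Z_i > t y_i for all i},
   of probability C_B(exp(-t y_1), ..., exp(-t y_n)). Expanding every Bernstein basis polynomial
   w^nu (1 - w)^(m - nu) binomially writes C_B in the monomial basis as sum_l beta_l prod_i w_i^l_i,
   so this conditional probability is sum_l beta_l exp(-t sum_i l_i y_i). As \<Theta> is independent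
   of Z, integrating over \<Theta> (Fubini) turns each exponential into the Laplace transform
   L(sum_i l_i y_i); y_i = L^-1(u_i) gives the formula, and a single index gives the margins. *)

lemma bernstein_basis_monomial_expansion:
  fixes w :: real
  assumes "\<nu> \<le> m"
  shows "real (m choose \<nu>) * w ^ \<nu> * (1 - w) ^ (m - \<nu>) =
    (\<Sum>l\<in>{0..m}. if \<nu> \<le> l then (-1) ^ (l - \<nu>) * real ((m - \<nu>) choose (m - l)) * real (m choose \<nu>) * w ^ l else 0)"
proof -
  have "(1 - w) ^ (m - \<nu>) = (\<Sum>j\<le>m - \<nu>. real ((m - \<nu>) choose j) * (-w) ^ j)"
    using binomial_ring[of "-w" 1 "m - \<nu>"] by simp
  also have "\<dots> = (\<Sum>l\<in>{\<nu>..m}. real ((m - \<nu>) choose (l - \<nu>)) * (-w) ^ (l - \<nu>))"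
    by (rule sum.reindex_bij_witness[where i="\<lambda>l. l - \<nu>" and j="\<lambda>j. j + \<nu>"]) (use assms in auto)
  also have "\<dots> = (\<Sum>l\<in>{\<nu>..m}. real ((m - \<nu>) choose (m - l)) * (-1) ^ (l - \<nu>) * w ^ (l - \<nu>))"
  proof (rule sum.cong[OF refl])
    fix l assume l: "l \<in> {\<nu>..m}"
    then have "(m - \<nu>) choose (l - \<nu>) = (m - \<nu>) choose (m - l)"
      using binomial_symmetric[of "l - \<nu>" "m - \<nu>"] by auto
    then show "real ((m - \<nu>) choose (l - \<nu>)) * (-w) ^ (l - \<nu>) = real ((m - \<nu>) choose (m - l)) * (-1) ^ (l - \<nu>) * w ^ (l - \<nu>)"
      by (simp add: power_minus[of w])
  qed
  finally have "real (m choose \<nu>) * w ^ \<nu> * (1 - w) ^ (m - \<nu>) =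
      (\<Sum>l\<in>{\<nu>..m}. (-1) ^ (l - \<nu>) * real ((m - \<nu>) choose (m - l)) * real (m choose \<nu>) * (w ^ \<nu> * w ^ (l - \<nu>)))"
    by (simp add: sum_distrib_left mult_ac)
  also have "\<dots> = (\<Sum>l\<in>{\<nu>..m}. (-1) ^ (l - \<nu>) * real ((m - \<nu>) choose (m - l)) * real (m choose \<nu>) * w ^ l)"
    by (intro sum.cong refl) (auto simp: power_add[symmetric])
  also have "\<dots> = (\<Sum>l\<in>{0..m}. if \<nu> \<le> l then (-1) ^ (l - \<nu>) * real ((m - \<nu>) choose (m - l)) * real (m choose \<nu>) * w ^ l else 0)"
    by (rule sum.mono_neutral_cong_left) auto
  finally show ?thesis .
qed

lemma prod_bernstein_basis_monomial_expansion:
  fixes w :: "nat \<Rightarrow> real"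
  assumes \<nu>: "\<nu> \<in> PiE {..<n} (\<lambda>i. {0..m i})"
  shows "(\<Prod>i<n. real (m i choose \<nu> i) * w i ^ \<nu> i * (1 - w i) ^ (m i - \<nu> i)) =
    (\<Sum>l\<in>PiE {..<n} (\<lambda>i. {0..m i}). if \<forall>i<n. \<nu> i \<le> l i then
       (-1) ^ (\<Sum>i<n. l i - \<nu> i) * (\<Prod>i<n. real ((m i - \<nu> i) choose (m i - l i))) *
       (\<Prod>i<n. real (m i choose \<nu> i)) * (\<Prod>i<n. w i ^ l i) else 0)"
    (is "_ = ?rhs")
proof -
  have "(\<Prod>i<n. real (m i choose \<nu> i) * w i ^ \<nu> i * (1 - w i) ^ (m i - \<nu> i)) =
      (\<Prod>i<n. \<Sum>k\<in>{0..m i}. if \<nu> i \<le> k then (-1) ^ (k - \<nu> i) * real ((m i - \<nu> i) choose (m i - k)) * real (m i choose \<nu> i) * w i ^ k else 0)"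
    using \<nu> by (intro prod.cong refl bernstein_basis_monomial_expansion) (auto simp: PiE_iff)
  also have "\<dots> = (\<Sum>l\<in>PiE {..<n} (\<lambda>i. {0..m i}). \<Prod>i<n. if \<nu> i \<le> l i then (-1) ^ (l i - \<nu> i) * real ((m i - \<nu> i) choose (m i - l i)) * real (m i choose \<nu> i) * w i ^ l i else 0)"
    by (rule prod_sum_PiE) auto
  also have "\<dots> = ?rhs"
    by (intro sum.cong refl) (auto simp: prod.distrib power_sum intro: prod_zero)
  finally show ?thesis .
qed

lemma bernstein_copula_monomial_expansion:
  "bernstein_copula n m alpha w =
    (\<Sum>l\<in>PiE {..<n} (\<lambda>i. {0..m i}). beta_coeff n m alpha l * (\<Prod>i<n. w i ^ l i))"
proof -
  let ?P = "\<lambda>l. PiE {..<n} (\<lambda>i. {0..l i})"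
  define a where "a \<nu> = alpha (\<lambda>i. real (\<nu> i) / real (m i))" for \<nu> :: "nat \<Rightarrow> nat"
  define c where "c \<nu> l = (-1) ^ (\<Sum>i<n. l i - \<nu> i) *
      (\<Prod>i<n. real ((m i - \<nu> i) choose (m i - l i))) * (\<Prod>i<n. real (m i choose \<nu> i))"
    for \<nu> l :: "nat \<Rightarrow> nat"
  have "bernstein_copula n m alpha w =
      (\<Sum>\<nu>\<in>?P m. \<Sum>l\<in>?P m. if \<forall>i<n. \<nu> i \<le> l i then a \<nu> * c \<nu> l * (\<Prod>i<n. w i ^ l i) else 0)"
    unfolding bernstein_copula_def
  proof (intro sum.cong refl)
    fix \<nu> assume "\<nu> \<in> ?P m"
    then show "alpha (\<lambda>i. real (\<nu> i) / real (m i)) *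
        (\<Prod>i<n. real (m i choose \<nu> i) * w i ^ \<nu> i * (1 - w i) ^ (m i - \<nu> i)) =
        (\<Sum>l\<in>?P m. if \<forall>i<n. \<nu> i \<le> l i then a \<nu> * c \<nu> l * (\<Prod>i<n. w i ^ l i) else 0)"
      unfolding prod_bernstein_basis_monomial_expansion[OF \<open>\<nu> \<in> ?P m\<close>] sum_distrib_left
      by (intro sum.cong refl) (auto simp: a_def c_def mult.assoc)
  qed
  also have "\<dots> = (\<Sum>l\<in>?P m. \<Sum>\<nu>\<in>?P m. if \<forall>i<n. \<nu> i \<le> l i then a \<nu> * c \<nu> l * (\<Prod>i<n. w i ^ l i) else 0)"
    by (rule sum.swap)
  also have "\<dots> = (\<Sum>l\<in>?P m. \<Sum>\<nu>\<in>?P l. a \<nu> * c \<nu> l * (\<Prod>i<n. w i ^ l i))"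
  proof (rule sum.cong[OF refl])
    fix l assume "l \<in> ?P m"
    then have "?P l = {\<nu>\<in>?P m. \<forall>i<n. \<nu> i \<le> l i}"
      by (auto simp: PiE_iff) (meson le_trans lessThan_iff, meson extensional_arb lessThan_iff)
    then show "(\<Sum>\<nu>\<in>?P m. if \<forall>i<n. \<nu> i \<le> l i then a \<nu> * c \<nu> l * (\<Prod>i<n. w i ^ l i) else 0) =
        (\<Sum>\<nu>\<in>?P l. a \<nu> * c \<nu> l * (\<Prod>i<n. w i ^ l i))"
      by (simp add: sum.inter_filter finite_PiE)
  qed
  also have "\<dots> = (\<Sum>l\<in>?P m. beta_coeff n m alpha l * (\<Prod>i<n. w i ^ l i))"
    unfolding beta_coeff_def sum_distrib_right by (simp add: a_def c_def mult_ac)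
  finally show ?thesis .
qed

lemma (in prob_space) pair_distr_eq_distr_pair_if_indep_set:
  assumes T: "T \<in> measurable M K" and Y: "Y \<in> measurable M N"
    and ind: "indep_set {T -` A \<inter> space M | A. A \<in> sets K} {Y -` B \<inter> space M | B. B \<in> sets N}"
  shows "distr M K T \<Otimes>\<^sub>M distr M N Y = distr M (K \<Otimes>\<^sub>M N) (\<lambda>\<omega>. (T \<omega>, Y \<omega>))"
proof (rule pair_measure_eqI)
  interpret T: prob_space "distr M K T" by (rule prob_space_distr[OF T])
  interpret Y: prob_space "distr M N Y" by (rule prob_space_distr[OF Y])
  show "sigma_finite_measure (distr M K T)" "sigma_finite_measure (distr M N Y)"
    by unfold_locales
  show "sets (distr M K T \<Otimes>\<^sub>M distr M N Y) = sets (distr M (K \<Otimes>\<^sub>M N) (\<lambda>\<omega>. (T \<omega>, Y \<omega>)))"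
    by (simp only: sets_distr sets_pair_measure_cong[OF sets_distr sets_distr])
  fix A B assume "A \<in> sets (distr M K T)" "B \<in> sets (distr M N Y)"
  then have A: "A \<in> sets K" and B: "B \<in> sets N" by simp_all
  have "(\<lambda>\<omega>. (T \<omega>, Y \<omega>)) -` (A \<times> B) \<inter> space M = (T -` A \<inter> space M) \<inter> (Y -` B \<inter> space M)"
    by blast
  moreover have "prob ((T -` A \<inter> space M) \<inter> (Y -` B \<inter> space M)) = prob (T -` A \<inter> space M) * prob (Y -` B \<inter> space M)"
    using A B by (intro indep_setD[OF ind]) blast+
  ultimately show "emeasure (distr M K T) A * emeasure (distr M N Y) B =
      emeasure (distr M (K \<Otimes>\<^sub>M N) (\<lambda>\<omega>. (T \<omega>, Y \<omega>))) (A \<times> B)"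
    using A B T Y by (simp add: emeasure_distr emeasure_eq_measure ennreal_mult)
qed

lemma (in prob_space) emeasure_indep_pair_eq_nn_integral:
  assumes T: "T \<in> measurable M K" and Y: "Y \<in> measurable M N"
    and ind: "indep_set {T -` A \<inter> space M | A. A \<in> sets K} {Y -` B \<inter> space M | B. B \<in> sets N}"
    and S: "S \<in> sets (K \<Otimes>\<^sub>M N)"
  shows "emeasure M {\<omega>\<in>space M. (T \<omega>, Y \<omega>) \<in> S} =
    (\<integral>\<^sup>+\<omega>. emeasure M {\<omega>'\<in>space M. (T \<omega>, Y \<omega>') \<in> S} \<partial>M)"
proof -
  note joint = pair_distr_eq_distr_pair_if_indep_set[OF T Y ind]
  interpret Y: prob_space "distr M N Y" by (rule prob_space_distr[OF Y])
  have S': "S \<in> sets (distr M K T \<Otimes>\<^sub>M distr M N Y)"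
    using S by (simp only: sets_pair_measure_cong[OF sets_distr sets_distr])
  have section_measurable: "(\<lambda>t. emeasure (distr M N Y) (Pair t -` S)) \<in> borel_measurable (distr M K T)"
    using Y.measurable_emeasure_Pair[OF S'] by (simp add: measurable_cong_sets[OF sets_distr refl])
  have "emeasure M {\<omega>\<in>space M. (T \<omega>, Y \<omega>) \<in> S} = emeasure (distr M (K \<Otimes>\<^sub>M N) (\<lambda>\<omega>. (T \<omega>, Y \<omega>))) S"
    using S T Y by (subst emeasure_distr) (auto intro!: arg_cong[where f="emeasure M"])
  also have "\<dots> = (\<integral>\<^sup>+t. emeasure (distr M N Y) (Pair t -` S) \<partial>distr M K T)"
    unfolding joint[symmetric] by (rule Y.emeasure_pair_measure_alt[OF S'])
  also have "\<dots> = (\<integral>\<^sup>+\<omega>. emeasure (distr M N Y) (Pair (T \<omega>) -` S) \<partial>M)"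
    by (rule nn_integral_distr[OF T section_measurable])
  also have "\<dots> = (\<integral>\<^sup>+\<omega>. emeasure M {\<omega>'\<in>space M. (T \<omega>, Y \<omega>') \<in> S} \<partial>M)"
    using S Y by (intro nn_integral_cong) (auto simp: emeasure_distr sets_Pair1 intro!: arg_cong[where f="emeasure M"])
  finally show ?thesis .
qed

lemma (in prob_space) measure_scale_mixture_survival:
  fixes Z :: "'i \<Rightarrow> 'a \<Rightarrow> real" and \<Theta> :: "'a \<Rightarrow> real" and F :: "real \<Rightarrow> real"
  assumes J: "finite J" "J \<subseteq> I"
    and Z: "\<And>i. i \<in> I \<Longrightarrow> Z i \<in> borel_measurable M" and \<Theta>: "\<Theta> \<in> borel_measurable M"
    and ind: "indep_set {\<Theta> -` A \<inter> space M | A. A \<in> sets borel}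
      {(\<lambda>\<omega>. \<lambda>i\<in>I. Z i \<omega>) -` B \<inter> space M | B. B \<in> sets (PiM I (\<lambda>_. borel))}"
    and pos: "AE \<omega> in M. \<Theta> \<omega> > 0"
    and F: "F \<in> borel_measurable borel"
    and survival: "\<And>t. t > 0 \<Longrightarrow> measure M {\<omega>\<in>space M. \<forall>i\<in>J. y i * t < Z i \<omega>} = F t"
  shows "measure M {\<omega>\<in>space M. \<forall>i\<in>J. Z i \<omega> / \<Theta> \<omega> > y i} = expectation (\<lambda>\<omega>. F (\<Theta> \<omega>))"
proof -
  let ?N = "PiM I (\<lambda>_. borel :: real measure)"
  let ?Zv = "\<lambda>\<omega>. \<lambda>i\<in>I. Z i \<omega>"
  have Zv: "?Zv \<in> measurable M ?N"
    using Z by (rule measurable_restrict)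
  \<comment> \<open>Off the null set \<open>\<Theta> \<le> 0\<close>, the event of interest is the preimage of \<open>S\<close> under \<open>(\<Theta>, Z)\<close>.\<close>
  define S where "S = {p \<in> space (borel \<Otimes>\<^sub>M ?N). 0 < fst p \<and> (\<forall>i\<in>J. y i * fst p < snd p i)}"
  have "Measurable.pred (borel \<Otimes>\<^sub>M ?N) (\<lambda>p. \<forall>i\<in>J. y i * fst p < snd p i)"
  proof (rule pred_intros_finite(3)[OF J(1)])
    fix i assume "i \<in> J"
    then have "(\<lambda>p. snd p i) \<in> borel_measurable (borel \<Otimes>\<^sub>M ?N)"
      using J(2) by (intro measurable_compose[OF measurable_snd measurable_component_singleton]) auto
    then show "Measurable.pred (borel \<Otimes>\<^sub>M ?N) (\<lambda>p. y i * fst p < snd p i)" by measurable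
  qed
  then have S: "S \<in> sets (borel \<Otimes>\<^sub>M ?N)"
    unfolding S_def by measurable
  have E: "{\<omega>\<in>space M. \<forall>i\<in>J. Z i \<omega> / \<Theta> \<omega> > y i} \<in> events"
    using J Z \<Theta> by (intro predE pred_intros_finite(3)) (auto, measurable)
  have A: "{\<omega>\<in>space M. (\<Theta> \<omega>, ?Zv \<omega>) \<in> S} \<in> events"
    using S \<Theta> Zv unfolding S_def by measurable
  have slice: "{\<omega>'\<in>space M. (t, ?Zv \<omega>') \<in> S} = {\<omega>'\<in>space M. \<forall>i\<in>J. y i * t < Z i \<omega>'}" if "t > 0" for t
    using that J(2) by (auto simp: S_def space_pair_measure space_PiM)
  have "measure M {\<omega>\<in>space M. \<forall>i\<in>J. Z i \<omega> / \<Theta> \<omega> > y i} = measure M {\<omega>\<in>space M. (\<Theta> \<omega>, ?Zv \<omega>) \<in> S}"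
    using pos by (intro measure_eq_AE[OF _ E A]) (auto simp: S_def space_pair_measure space_PiM pos_less_divide_eq subsetD[OF J(2)])
  also have "\<dots> = enn2real (\<integral>\<^sup>+\<omega>. emeasure M {\<omega>'\<in>space M. (\<Theta> \<omega>, ?Zv \<omega>') \<in> S} \<partial>M)"
    by (simp add: measure_def emeasure_indep_pair_eq_nn_integral[OF \<Theta> Zv ind S])
  also have "(\<integral>\<^sup>+\<omega>. emeasure M {\<omega>'\<in>space M. (\<Theta> \<omega>, ?Zv \<omega>') \<in> S} \<partial>M) = (\<integral>\<^sup>+\<omega>. ennreal (F (\<Theta> \<omega>)) \<partial>M)"
    using pos by (intro nn_integral_cong_AE) (auto simp: slice survival[symmetric] emeasure_eq_measure)
  also have "enn2real \<dots> = expectation (\<lambda>\<omega>. F (\<Theta> \<omega>))"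
    using pos F \<Theta> by (intro integral_eq_nn_integral[symmetric]) (auto simp: survival[symmetric])
  finally show ?thesis .
qed

lemma (in prob_space) measure_scale_mixture_survival_laplace:
  fixes Z :: "'i \<Rightarrow> 'a \<Rightarrow> real" and \<Theta> :: "'a \<Rightarrow> real" and L :: "real \<Rightarrow> real"
  assumes J: "finite J" "J \<subseteq> I"
    and Z: "\<And>i. i \<in> I \<Longrightarrow> Z i \<in> borel_measurable M" and \<Theta>: "\<Theta> \<in> borel_measurable M"
    and ind: "indep_set {\<Theta> -` A \<inter> space M | A. A \<in> sets borel}
      {(\<lambda>\<omega>. \<lambda>i\<in>I. Z i \<omega>) -` B \<inter> space M | B. B \<in> sets (PiM I (\<lambda>_. borel))}"
    and pos: "AE \<omega> in M. \<Theta> \<omega> > 0"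
    and laplace: "\<And>s. s \<ge> 0 \<Longrightarrow> L s = expectation (\<lambda>\<omega>. exp (- s * \<Theta> \<omega>))"
    and K: "finite K" "\<And>k. k \<in> K \<Longrightarrow> s k \<ge> 0"
    and survival: "\<And>t. t > 0 \<Longrightarrow>
      measure M {\<omega>\<in>space M. \<forall>i\<in>J. y i * t < Z i \<omega>} = (\<Sum>k\<in>K. c k * exp (- s k * t))"
  shows "measure M {\<omega>\<in>space M. \<forall>i\<in>J. Z i \<omega> / \<Theta> \<omega> > y i} = (\<Sum>k\<in>K. c k * L (s k))"
proof -
  have "measure M {\<omega>\<in>space M. \<forall>i\<in>J. Z i \<omega> / \<Theta> \<omega> > y i} =
      expectation (\<lambda>\<omega>. \<Sum>k\<in>K. c k * exp (- s k * \<Theta> \<omega>))"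
    by (rule measure_scale_mixture_survival[OF J Z \<Theta> ind pos _ survival]) auto
  also have "\<dots> = (\<Sum>k\<in>K. c k * expectation (\<lambda>\<omega>. exp (- s k * \<Theta> \<omega>)))"
  proof -
    have "integrable M (\<lambda>\<omega>. exp (- s k * \<Theta> \<omega>))" if "k \<in> K" for k
      using pos K(2)[OF that] \<Theta>
      by (intro integrable_const_bound[where B=1]) (auto elim!: AE_mp)
    then show ?thesis
      by (subst Bochner_Integration.integral_sum) auto
  qed
  finally show ?thesis
    using K(2) by (simp add: laplace)
qed

lemma bernstein_copula_exp:
  "bernstein_copula n m alpha (\<lambda>i. exp (- (y i * t))) =
    (\<Sum>l\<in>PiE {..<n} (\<lambda>i. {0..m i}). beta_coeff n m alpha l * exp (- (\<Sum>i<n. real (l i) * y i) * t))"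
proof -
  have "(\<Prod>i<n. exp (- (y i * t)) ^ l i) = exp (- (\<Sum>i<n. real (l i) * y i) * t)" for l :: "nat \<Rightarrow> nat"
    by (simp add: exp_of_nat_mult[symmetric] exp_sum[symmetric] sum_distrib_left sum_distrib_right sum_negf mult_ac)
  then show ?thesis
    by (simp add: bernstein_copula_monomial_expansion)
qed

theorem proposition1:
  fixes M :: "'a measure" and n :: nat and m :: "nat \<Rightarrow> nat"
    and alpha :: "(nat \<Rightarrow> real) \<Rightarrow> real"
    and Z :: "nat \<Rightarrow> 'a \<Rightarrow> real" and \<Theta> :: "'a \<Rightarrow> real"
    and f\<^sub>\<Theta> :: "real \<Rightarrow> ennreal" and L :: "real \<Rightarrow> real"
  assumes "prob_space M"
    and "n \<ge> 2" and "\<forall>i<n. m i \<ge> 1"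
    and "is_copula n (bernstein_copula n m alpha)"
    and "\<forall>i<n. Z i \<in> borel_measurable M"
    and "\<forall>i<n. \<forall>z\<ge>0. measure M {\<omega>\<in>space M. Z i \<omega> > z} = exp (- z)"
    and "\<forall>z. (\<forall>i<n. z i \<ge> 0) \<longrightarrow>
           measure M {\<omega>\<in>space M. \<forall>i<n. Z i \<omega> > z i}
             = bernstein_copula n m alpha (\<lambda>i. exp (- z i))"
    and "\<Theta> \<in> borel_measurable M"
    and "AE \<omega> in M. \<Theta> \<omega> > 0"
    and "distributed M lborel \<Theta> f\<^sub>\<Theta>"
    and "prob_space.indep_set M
           {\<Theta> -` A \<inter> space M | A. A \<in> sets borel}
           {(\<lambda>\<omega>. \<lambda>i\<in>{..<n}. Z i \<omega>) -` B \<inter> space M | B. B \<in> sets (PiM {..<n} (\<lambda>_. borel))}"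
    and "\<forall>s\<ge>0. L s = (\<integral>\<omega>. exp (- s * \<Theta> \<omega>) \<partial>M)"
    and "strict_antimono_on {0..} L" and "continuous_on {0..} L" and "L ` {0..} = {0<..1}"
  shows "(\<forall>i<n. \<forall>x\<ge>0. measure M {\<omega>\<in>space M. Z i \<omega> / \<Theta> \<omega> > x} = L x) \<and>
         (\<forall>u. (\<forall>i<n. u i \<in> {0<..1}) \<longrightarrow>
            measure M {\<omega>\<in>space M. \<forall>i<n. Z i \<omega> / \<Theta> \<omega> > the_inv_into {0..} L (u i)}
              = (\<Sum>l\<in>PiE {..<n} (\<lambda>i. {0..m i}).
                   beta_coeff n m alpha l *
                   L (\<Sum>i<n. real (l i) * the_inv_into {0..} L (u i))))"
proof -
  interpret prob_space M by fact
  have mixture: "measure M {\<omega>\<in>space M. \<forall>i\<in>J. Z i \<omega> / \<Theta> \<omega> > y i} = (\<Sum>k\<in>K. c k * L (s k))"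
    if "J \<subseteq> {..<n}" "finite K" "\<And>k. k \<in> K \<Longrightarrow> s k \<ge> 0"
      and "\<And>t. t > 0 \<Longrightarrow>
        measure M {\<omega>\<in>space M. \<forall>i\<in>J. y i * t < Z i \<omega>} = (\<Sum>k\<in>K. c k * exp (- s k * t))"
    for J and K :: "'k set" and s y c
    using that assms(5,8,9,11,12) finite_subset[OF that(1)]
    by (intro measure_scale_mixture_survival_laplace[where I="{..<n}"]) auto
  show ?thesis
  proof (intro conjI allI impI)
    fix i x assume "i < n" "(0::real) \<le> x"
    then show "measure M {\<omega>\<in>space M. Z i \<omega> / \<Theta> \<omega> > x} = L x"
      using mixture[of "{i}" "{x}" id "\<lambda>_. x" "\<lambda>_. 1"] assms(6) by (simp add: mult.commute)
  next
    fix u :: "nat \<Rightarrow> real" assume u: "\<forall>i<n. u i \<in> {0<..1}"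
    define y where "y i = the_inv_into {0..} L (u i)" for i
    have "inj_on L {0..}"
      using assms(13) strict_antimono_iff_antimono by blast
    then have y: "y i \<ge> 0" if "i < n" for i
      using the_inv_into_into[of L "{0..}" "u i" "{0..}"] u that assms(15) unfolding y_def by auto
    have "measure M {\<omega>\<in>space M. \<forall>i\<in>{..<n}. Z i \<omega> / \<Theta> \<omega> > y i} =
        (\<Sum>l\<in>PiE {..<n} (\<lambda>i. {0..m i}). beta_coeff n m alpha l * L (\<Sum>i<n. real (l i) * y i))"
    proof (rule mixture)
      fix t :: real assume "t > 0"
      then show "measure M {\<omega>\<in>space M. \<forall>i\<in>{..<n}. y i * t < Z i \<omega>} =
          (\<Sum>l\<in>PiE {..<n} (\<lambda>i. {0..m i}). beta_coeff n m alpha l * exp (- (\<Sum>i<n. real (l i) * y i) * t))"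
        using assms(7)[rule_format, of "\<lambda>i. y i * t"] y by (simp add: bernstein_copula_exp Ball_def)
    qed (use y in \<open>auto intro: sum_nonneg finite_PiE\<close>)
    then show "measure M {\<omega>\<in>space M. \<forall>i<n. Z i \<omega> / \<Theta> \<omega> > the_inv_into {0..} L (u i)} =
        (\<Sum>l\<in>PiE {..<n} (\<lambda>i. {0..m i}). beta_coeff n m alpha l * L (\<Sum>i<n. real (l i) * the_inv_into {0..} L (u i)))"
      by (simp add: y_def Ball_def)
  qed
qed

end
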